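(* Let $0\le j\le n$. (1) Suppose $w\in B_n^j(2143)$ and the $j$ indices $i\in\{1,\ldots,n\}$ with $w(i)>0$ are $1\leq i_1<i_2<\cdots<i_j\leq n$. Then $w(i_1)<w(i_2)<\cdots<w(i_j)$. (2) Suppose $w\in B_n^j(1234)$ and the $j$ indices $i\in\{1,\ldots,n\}$ with $w(i)>0$ are $1\leq i_1<\cdots<i_j\leq n$. Then $w(i_1)>w(i_2)>\cdots>w(i_j)$.
   Context: $B_n$ is the group of permutations $w$ of $\{-n,\ldots,-1,1,\ldots,n\}$ with $w(-i)=-w(i)$. $w$ avoids $1234$ if there are no indices $-n\le a<b<c<d\le n$ (nonzero) with $w(a)<w(b)<w(c)<w(d)$; $w$ avoids $2143$ if there are no such indices with $w(b)<w(a)<w(d)<w(c)$. For $\pi\in\{1234,2143\}$, $B_n^j(\pi)$ is the set of $w\in B_n$ avoiding $\pi$ with $w(i)>0$ for exactly $j$ indices $i\in\{1,\ldots,n\}$. *)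

theory Defs
  imports Main
begin

definition signed_dom :: "nat \<Rightarrow> int set" where
  "signed_dom n = {i. i \<noteq> 0 \<and> -int n \<le> i \<and> i \<le> int n}"

text \<open>Hyperoctahedral group B_n: signed permutations, represented as functions on int
  that are bijections of the signed domain, satisfy w(-i) = -w(i), and are the identity
  outside the domain (canonical representative).\<close>
definition B :: "nat \<Rightarrow> (int \<Rightarrow> int) set" where
  "B n = {w. bij_betw w (signed_dom n) (signed_dom n)
              \<and> (\<forall>i \<in> signed_dom n. w (-i) = - w i)
              \<and> (\<forall>i. i \<notin> signed_dom n \<longrightarrow> w i = i)}"

definition avoids_1234 :: "nat \<Rightarrow> (int \<Rightarrow> int) \<Rightarrow> bool" where
  "avoids_1234 n w \<longleftrightarrow> \<not> (\<exists>a \<in> signed_dom n. \<exists>b \<in> signed_dom n. \<exists>c \<in> signed_dom n. \<exists>d \<in> signed_dom n.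
      a < b \<and> b < c \<and> c < d \<and> w a < w b \<and> w b < w c \<and> w c < w d)"

definition avoids_2143 :: "nat \<Rightarrow> (int \<Rightarrow> int) \<Rightarrow> bool" where
  "avoids_2143 n w \<longleftrightarrow> \<not> (\<exists>a \<in> signed_dom n. \<exists>b \<in> signed_dom n. \<exists>c \<in> signed_dom n. \<exists>d \<in> signed_dom n.
      a < b \<and> b < c \<and> c < d \<and> w b < w a \<and> w a < w d \<and> w d < w c)"

definition npos :: "nat \<Rightarrow> (int \<Rightarrow> int) \<Rightarrow> nat" where
  "npos n w = card {i \<in> {1..int n}. w i > 0}"

definition B_j_2143 :: "nat \<Rightarrow> nat \<Rightarrow> (int \<Rightarrow> int) set" where
  "B_j_2143 n j = {w \<in> B n. avoids_2143 n w \<and> npos n w = j}"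

definition B_j_1234 :: "nat \<Rightarrow> nat \<Rightarrow> (int \<Rightarrow> int) set" where
  "B_j_1234 n j = {w \<in> B n. avoids_1234 n w \<and> npos n w = j}"

end

theory Submission
  imports Defs
begin

text \<open>Two positive entries \<open>w i1\<close>, \<open>w i2\<close> with \<open>0 < i1 < i2\<close> come with their mirror images
  \<open>w (-i2) = - w i2\<close> and \<open>w (-i1) = - w i1\<close> at positions \<open>-i2 < -i1\<close>. Reading the four values
  at \<open>-i2 < -i1 < i1 < i2\<close> gives the pattern 2143 if \<open>w i1 > w i2\<close> and the pattern 1234 if
  \<open>w i1 < w i2\<close>.\<close>

lemma signed_dom_if_pos:
  "i \<in> {1..int n} \<Longrightarrow> i \<in> signed_dom n"
  "i \<in> {1..int n} \<Longrightarrow> -i \<in> signed_dom n"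
  by (auto simp: signed_dom_def)

lemma B_odd: "w \<in> B n \<Longrightarrow> i \<in> signed_dom n \<Longrightarrow> w (-i) = - w i"
  by (simp add: B_def)

lemma B_inj_on: "w \<in> B n \<Longrightarrow> inj_on w (signed_dom n)"
  by (simp add: B_def bij_betw_def)

lemma B_pos_values_distinct:
  assumes "w \<in> B n" "i1 \<in> {1..int n}" "i2 \<in> {1..int n}" "i1 < i2"
  shows "w i1 \<noteq> w i2"
  using assms B_inj_on signed_dom_if_pos(1) by (metis inj_on_eq_iff less_irrefl)

lemma B_pos_descent_not_avoids_2143:
  assumes w: "w \<in> B n" and i1: "i1 \<in> {1..int n}" and i2: "i2 \<in> {1..int n}"
    and "i1 < i2" "0 < w i2" "w i2 < w i1"
  shows "\<not> avoids_2143 n w"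
proof -
  have dom: "-i2 \<in> signed_dom n" "-i1 \<in> signed_dom n" "i1 \<in> signed_dom n" "i2 \<in> signed_dom n"
    using i1 i2 signed_dom_if_pos by auto
  have "w (-i1) < w (-i2)" "w (-i2) < w i2"
    using assms B_odd[OF w] dom by auto
  moreover have "-i2 < -i1" "-i1 < i1" using i1 \<open>i1 < i2\<close> by auto
  ultimately show ?thesis
    unfolding avoids_2143_def using dom assms by blast
qed

lemma B_pos_ascent_not_avoids_1234:
  assumes w: "w \<in> B n" and i1: "i1 \<in> {1..int n}" and i2: "i2 \<in> {1..int n}"
    and "i1 < i2" "0 < w i1" "w i1 < w i2"
  shows "\<not> avoids_1234 n w"
proof -
  have dom: "-i2 \<in> signed_dom n" "-i1 \<in> signed_dom n" "i1 \<in> signed_dom n" "i2 \<in> signed_dom n"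
    using i1 i2 signed_dom_if_pos by auto
  have "w (-i2) < w (-i1)" "w (-i1) < w i1"
    using assms B_odd[OF w] dom by auto
  moreover have "-i2 < -i1" "-i1 < i1" using i1 \<open>i1 < i2\<close> by auto
  ultimately show ?thesis
    unfolding avoids_1234_def using dom assms by blast
qed

lemma avoids_2143_pos_values_increasing:
  assumes "w \<in> B n" "avoids_2143 n w" "i1 \<in> {1..int n}" "i2 \<in> {1..int n}"
    and "i1 < i2" "0 < w i2"
  shows "w i1 < w i2"
  using assms B_pos_values_distinct B_pos_descent_not_avoids_2143
  by (metis linorder_neqE)

lemma avoids_1234_pos_values_decreasing:
  assumes "w \<in> B n" "avoids_1234 n w" "i1 \<in> {1..int n}" "i2 \<in> {1..int n}"
    and "i1 < i2" "0 < w i1"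
  shows "w i2 < w i1"
  using assms B_pos_values_distinct B_pos_ascent_not_avoids_1234
  by (metis linorder_neqE)

text \<open>The number \<open>j\<close> of positive entries plays no role.\<close>

theorem lemma2p1:
  fixes n j :: nat
  assumes "j \<le> n"
  shows "(\<forall>w \<in> B_j_2143 n j. \<forall>i1 \<in> {1..int n}. \<forall>i2 \<in> {1..int n}.
            i1 < i2 \<and> w i1 > 0 \<and> w i2 > 0 \<longrightarrow> w i1 < w i2)
       \<and> (\<forall>w \<in> B_j_1234 n j. \<forall>i1 \<in> {1..int n}. \<forall>i2 \<in> {1..int n}.
            i1 < i2 \<and> w i1 > 0 \<and> w i2 > 0 \<longrightarrow> w i1 > w i2)"
  using avoids_2143_pos_values_increasing avoids_1234_pos_values_decreasing
  by (auto simp: B_j_2143_def B_j_1234_def)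

end
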